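(* The map $T\colon\mathcal{I}_\alpha\to\mathbb{T}$ defined by $T(\beta)=([0,\mathscr{D}_\beta(\infty)],d,M(\beta))$, where $d$ is the Euclidean metric restricted to $[0,\mathscr{D}_\beta(\infty)]$ and $M(\beta)=\sum_{U\in\beta}\mathrm{Leb}(U)\,\delta_{\mathscr{D}_\beta(U)}$, is continuous from $(\mathcal{I}_\alpha,d_\alpha)$ to $\mathbb{T}$.
   Context: Fix $\alpha\in(0,1)$. $\mathbb{T}$ denotes the space of isometry classes of compact rooted weighted $\mathbb{R}$-trees (rooted compact real trees equipped with a finite Borel measure), equipped with the Gromov--Hausdorff--Prokhorov metric; the segment $[0,\mathscr{D}_\beta(\infty)]$ is rooted at $0$. An interval partition is a set $\beta$ of disjoint open subintervals (blocks) of some interval $[0,L]$ that cover $[0,L]$ up to a Lebesgue-null set; write $\|\beta\|:=L$ and $\mathrm{Leb}(U)$ for the length of a block $U$. A partition $\beta$ has the $\alpha$-diversity property if for every $t\in[0,\|\beta\|]$ the limit $\mathscr{D}_\beta(t):=\Gamma(1-\alpha)\lim_{h\downarrow0}h^\alpha\#\{(a,b)\in\beta\colon b-a>h,\ b\le t\}$ exists; $\mathcal{I}_\alpha$ is the set of such partitions. For $U\in\beta$, $\mathscr{D}_\beta(U):=\mathscr{D}_\beta(t)$ for any $t\in U$, and $\mathscr{D}_\beta(\infty):=\mathscr{D}_\beta(\|\beta\|)$. A correspondence between $\beta,\gamma\in\mathcal{I}_\alpha$ is a finite sequence $(U_j,V_j)_{j\in[n]}$, $n\ge0$, of pairs in $\beta\times\gamma$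 with $(U_j)_j$ and $(V_j)_j$ each strictly increasing in left-to-right order. Its $\alpha$-distortion is the maximum of (i) $\sum_{j}|\mathrm{Leb}(U_j)-\mathrm{Leb}(V_j)|+\|\beta\|-\sum_j\mathrm{Leb}(U_j)$, (ii) $\sum_{j}|\mathrm{Leb}(U_j)-\mathrm{Leb}(V_j)|+\|\gamma\|-\sum_j\mathrm{Leb}(V_j)$, (iii) $\sup_{j}|\mathscr{D}_\beta(U_j)-\mathscr{D}_\gamma(V_j)|$, (iv) $|\mathscr{D}_\beta(\infty)-\mathscr{D}_\gamma(\infty)|$. $d_\alpha(\beta,\gamma)$ is the infimum of the $\alpha$-distortion over all correspondences. *)

theory Defs
  imports "HOL-Analysis.Analysis"
begin

text \<open>A block (a,b) is represented by the pair of its endpoints; an interval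
partition is a set of such pairs.\<close>

type_synonym ipart = "(real \<times> real) set"

definition block :: "real \<times> real \<Rightarrow> real set" where
  "block U = {fst U <..< snd U}"

definition Leb :: "real \<times> real \<Rightarrow> real" where
  "Leb U = snd U - fst U"

definition ip_mass :: "ipart \<Rightarrow> real" where
  "ip_mass \<beta> = Sup (insert 0 (snd ` \<beta>))"

definition is_ipart :: "ipart \<Rightarrow> bool" where
  "is_ipart \<beta> \<longleftrightarrow>
     (\<forall>U\<in>\<beta>. 0 \<le> fst U \<and> fst U < snd U) \<and>
     bdd_above (snd ` \<beta>) \<and>
     disjoint_family_on block \<beta> \<and>
     emeasure lebesgue ({0..ip_mass \<beta>} - (\<Union>U\<in>\<beta>. block U)) = 0"

definition count_gt :: "ipart \<Rightarrow> real \<Rightarrow> real \<Rightarrow> real" where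
  "count_gt \<beta> h t = real (card {U\<in>\<beta>. Leb U > h \<and> snd U \<le> t})"

definition has_diversity :: "real \<Rightarrow> ipart \<Rightarrow> bool" where
  "has_diversity \<alpha> \<beta> \<longleftrightarrow>
     (\<forall>t\<in>{0..ip_mass \<beta>}. \<exists>l. ((\<lambda>h. h powr \<alpha> * count_gt \<beta> h t) \<longlongrightarrow> l) (at_right 0))"

definition I_alpha :: "real \<Rightarrow> ipart set" where
  "I_alpha \<alpha> = {\<beta>. is_ipart \<beta> \<and> has_diversity \<alpha> \<beta>}"

definition div_at :: "real \<Rightarrow> ipart \<Rightarrow> real \<Rightarrow> real" where
  "div_at \<alpha> \<beta> t = Gamma (1 - \<alpha>) * Lim (at_right 0) (\<lambda>h. h powr \<alpha> * count_gt \<beta> h t)"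

text \<open>Diversity of a block: value at any point of the block (here its midpoint).\<close>
definition div_block :: "real \<Rightarrow> ipart \<Rightarrow> real \<times> real \<Rightarrow> real" where
  "div_block \<alpha> \<beta> U = div_at \<alpha> \<beta> ((fst U + snd U) / 2)"

definition div_inf :: "real \<Rightarrow> ipart \<Rightarrow> real" where
  "div_inf \<alpha> \<beta> = div_at \<alpha> \<beta> (ip_mass \<beta>)"

definition is_correspondence :: "ipart \<Rightarrow> ipart \<Rightarrow> ((real \<times> real) \<times> (real \<times> real)) list \<Rightarrow> bool" where
  "is_correspondence \<beta> \<gamma> C \<longleftrightarrow>
     (\<forall>p\<in>set C. fst p \<in> \<beta> \<and> snd p \<in> \<gamma>) \<and>
     sorted_wrt (\<lambda>p q. fst (fst p) < fst (fst q)) C \<and>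
     sorted_wrt (\<lambda>p q. fst (snd p) < fst (snd q)) C"

definition distortion :: "real \<Rightarrow> ipart \<Rightarrow> ipart \<Rightarrow> ((real \<times> real) \<times> (real \<times> real)) list \<Rightarrow> real" where
  "distortion \<alpha> \<beta> \<gamma> C =
     (let S = (\<Sum>p\<leftarrow>C. \<bar>Leb (fst p) - Leb (snd p)\<bar>) in
      Max {S + ip_mass \<beta> - (\<Sum>p\<leftarrow>C. Leb (fst p)),
           S + ip_mass \<gamma> - (\<Sum>p\<leftarrow>C. Leb (snd p)),
           Sup (insert 0 ((\<lambda>p. \<bar>div_block \<alpha> \<beta> (fst p) - div_block \<alpha> \<gamma> (snd p)\<bar>) ` set C)),
           \<bar>div_inf \<alpha> \<beta> - div_inf \<alpha> \<gamma>\<bar>})"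

definition d_alpha :: "real \<Rightarrow> ipart \<Rightarrow> ipart \<Rightarrow> real" where
  "d_alpha \<alpha> \<beta> \<gamma> = Inf {distortion \<alpha> \<beta> \<gamma> C | C. is_correspondence \<beta> \<gamma> C}"

text \<open>Rooted weighted compact subsets (X, r, mu) of the real line with the Euclidean
metric; mu is a finite measure given as a set function on all subsets (the measures
used below are countable sums of point masses).  Embeddings of two spaces into a common
metric space are represented, as usual, by pseudometrics on the disjoint union that
restrict to the given metrics.\<close>

definition admissible :: "real set \<Rightarrow> real set \<Rightarrow> (real + real \<Rightarrow> real + real \<Rightarrow> real) \<Rightarrow> bool" where
  "admissible X Y \<delta> \<longleftrightarrow>
     (let Z = Inl ` X \<union> Inr ` Y in
       (\<forall>z\<in>Z. \<delta> z z = 0) \<and>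
       (\<forall>z\<in>Z. \<forall>w\<in>Z. \<delta> z w = \<delta> w z \<and> 0 \<le> \<delta> z w) \<and>
       (\<forall>z\<in>Z. \<forall>w\<in>Z. \<forall>v\<in>Z. \<delta> z v \<le> \<delta> z w + \<delta> w v) \<and>
       (\<forall>x\<in>X. \<forall>x'\<in>X. \<delta> (Inl x) (Inl x') = dist x x') \<and>
       (\<forall>y\<in>Y. \<forall>y'\<in>Y. \<delta> (Inr y) (Inr y') = dist y y'))"

definition hausdorff_in :: "('z \<Rightarrow> 'z \<Rightarrow> real) \<Rightarrow> 'z set \<Rightarrow> 'z set \<Rightarrow> real" where
  "hausdorff_in \<delta> A B = Inf {e. e > 0 \<and> (\<forall>a\<in>A. \<exists>b\<in>B. \<delta> a b \<le> e) \<and> (\<forall>b\<in>B. \<exists>a\<in>A. \<delta> b a \<le> e)}"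

definition eps_nbhd :: "('z \<Rightarrow> 'z \<Rightarrow> real) \<Rightarrow> 'z set \<Rightarrow> 'z set \<Rightarrow> real \<Rightarrow> 'z set" where
  "eps_nbhd \<delta> Z F e = {z\<in>Z. \<exists>f\<in>F. \<delta> z f < e}"

definition prokhorov_in :: "('z \<Rightarrow> 'z \<Rightarrow> real) \<Rightarrow> 'z set \<Rightarrow> ('z set \<Rightarrow> real) \<Rightarrow> ('z set \<Rightarrow> real) \<Rightarrow> real" where
  "prokhorov_in \<delta> Z \<mu> \<nu> = Inf {e. e > 0 \<and> (\<forall>F\<subseteq>Z.
        \<mu> F \<le> \<nu> (eps_nbhd \<delta> Z F e) + e \<and> \<nu> F \<le> \<mu> (eps_nbhd \<delta> Z F e) + e)}"

definition ghp :: "real set \<Rightarrow> real \<Rightarrow> (real set \<Rightarrow> real) \<Rightarrow> real set \<Rightarrow> real \<Rightarrow> (real set \<Rightarrow> real) \<Rightarrow> real" where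
  "ghp X r \<mu> Y s \<nu> = Inf {max (\<delta> (Inl r) (Inr s))
        (max (hausdorff_in \<delta> (Inl ` X) (Inr ` Y))
             (prokhorov_in \<delta> (Inl ` X \<union> Inr ` Y) (\<lambda>F. \<mu> (Inl -` F)) (\<lambda>F. \<nu> (Inr -` F)))) | \<delta>.
        admissible X Y \<delta>}"

definition M_meas :: "real \<Rightarrow> ipart \<Rightarrow> real set \<Rightarrow> real" where
  "M_meas \<alpha> \<beta> A = infsum Leb {U\<in>\<beta>. div_block \<alpha> \<beta> U \<in> A}"

definition dist_T :: "real \<Rightarrow> ipart \<Rightarrow> ipart \<Rightarrow> real" where
  "dist_T \<alpha> \<beta> \<gamma> = ghp {0..div_inf \<alpha> \<beta>} 0 (M_meas \<alpha> \<beta>) {0..div_inf \<alpha> \<gamma>} 0 (M_meas \<alpha> \<gamma>)"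

end

(* T is 1-Lipschitz. Given a correspondence (U_j, V_j) of distortion < e, put both segments
   [0, D_beta(infinity)] and [0, D_gamma(infinity)] on one real line, so that the roots coincide.
   The segments are then within Hausdorff distance |D_beta(infinity) - D_gamma(infinity)| < e.
   For the Prokhorov distance, the mass Leb U_j sitting at D_beta(U_j) is matched with the mass
   Leb V_j at D_gamma(V_j), less than e away, up to an error |Leb U_j - Leb V_j|, while the
   unmatched blocks of beta carry total mass at most ||beta|| - sum Leb U_j; the first two
   distortion terms bound exactly these errors. *)

theory Submission
  imports Defs
begin

lemma is_ipart_blockD:
  assumes "is_ipart \<beta>" "U \<in> \<beta>"
  shows "0 \<le> fst U" "fst U < snd U" "snd U \<le> ip_mass \<beta>"
proof -
  show "0 \<le> fst U" "fst U < snd U" using assms unfolding is_ipart_def by auto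
  have "bdd_above (insert 0 (snd ` \<beta>))" using assms(1) unfolding is_ipart_def by simp
  then show "snd U \<le> ip_mass \<beta>"
    unfolding ip_mass_def using assms(2) by (intro cSup_upper) auto
qed

lemma Leb_nonneg: "is_ipart \<beta> \<Longrightarrow> U \<in> \<beta> \<Longrightarrow> 0 \<le> Leb U"
  using is_ipart_blockD(2) by (fastforce simp: Leb_def)

lemma ip_mass_nonneg: "is_ipart \<beta> \<Longrightarrow> 0 \<le> ip_mass \<beta>"
  unfolding is_ipart_def ip_mass_def by (intro cSup_upper) auto

lemma sum_Leb_le_ip_mass:
  assumes ip: "is_ipart \<beta>" and F: "finite F" "F \<subseteq> \<beta>"
  shows "sum Leb F \<le> ip_mass \<beta>"
proof -
  have disj: "disjoint_family_on block F"
    using ip F unfolding is_ipart_def disjoint_family_on_def by blast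
  have "ennreal (sum Leb F) = (\<Sum>U\<in>F. emeasure lborel (block U))"
    using F is_ipart_blockD[OF ip] Leb_nonneg[OF ip]
    by (subst sum_ennreal[symmetric]) (auto simp: block_def Leb_def subset_eq)
  also have "\<dots> = emeasure lborel (\<Union>U\<in>F. block U)"
    by (rule sum_emeasure[OF _ disj F(1)]) (auto simp: block_def)
  also have "\<dots> \<le> emeasure lborel {0..ip_mass \<beta>}"
  proof (rule emeasure_mono)
    show "(\<Union>U\<in>F. block U) \<subseteq> {0..ip_mass \<beta>}"
    proof
      fix x assume "x \<in> (\<Union>U\<in>F. block U)"
      then obtain U where "U \<in> \<beta>" "fst U < x" "x < snd U" using F by (auto simp: block_def)
      then show "x \<in> {0..ip_mass \<beta>}" using is_ipart_blockD[OF ip, of U] by auto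
    qed
  qed simp
  also have "\<dots> = ennreal (ip_mass \<beta>)" using ip_mass_nonneg[OF ip] by simp
  finally show ?thesis using ip_mass_nonneg[OF ip] by (simp add: ennreal_le_iff)
qed

lemma Leb_summable_on:
  assumes ip: "is_ipart \<beta>" and S: "S \<subseteq> \<beta>"
  shows "Leb summable_on S"
proof (rule nonneg_bdd_above_summable_on)
  show "\<And>U. U \<in> S \<Longrightarrow> 0 \<le> Leb U" using Leb_nonneg[OF ip] S by auto
  show "bdd_above (sum Leb ` {F. F \<subseteq> S \<and> finite F})"
    using sum_Leb_le_ip_mass[OF ip] S by (intro bdd_aboveI[where M="ip_mass \<beta>"]) auto
qed

lemma infsum_Leb_le_finite_part:
  assumes ip: "is_ipart \<beta>" and S: "S \<subseteq> \<beta>" and K: "finite K" "K \<subseteq> \<beta>"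
  shows "infsum Leb S \<le> sum Leb (S \<inter> K) + (ip_mass \<beta> - sum Leb K)"
proof -
  have "infsum Leb S \<le> infsum Leb ((S \<inter> K) \<union> (\<beta> - K))"
    using S Leb_nonneg[OF ip] by (intro infsum_mono2 Leb_summable_on[OF ip]) auto
  also have "\<dots> = sum Leb (S \<inter> K) + infsum Leb (\<beta> - K)"
    using K S by (subst infsum_Un_disjoint) (auto intro: Leb_summable_on[OF ip])
  also have "infsum Leb (\<beta> - K) \<le> ip_mass \<beta> - sum Leb K"
  proof (rule infsum_le_finite_sums[OF Leb_summable_on[OF ip]])
    fix F assume F: "finite F" "F \<subseteq> \<beta> - K"
    then have "sum Leb F + sum Leb K = sum Leb (F \<union> K)"
      using K by (subst sum.union_disjoint) auto
    also have "\<dots> \<le> ip_mass \<beta>" using F K by (intro sum_Leb_le_ip_mass[OF ip]) auto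
    finally show "sum Leb F \<le> ip_mass \<beta> - sum Leb K" by simp
  qed auto
  finally show ?thesis by simp
qed

lemma infsum_Leb_matched_le:
  assumes ipb: "is_ipart \<beta>" and ipg: "is_ipart \<gamma>"
    and C: "set C \<subseteq> \<beta> \<times> \<gamma>" "distinct (map fst C)" "distinct (map snd C)"
    and matched: "\<forall>p\<in>set C. f (fst p) \<in> A \<longrightarrow> g (snd p) \<in> B"
  shows "infsum Leb {U\<in>\<beta>. f U \<in> A} \<le> infsum Leb {V\<in>\<gamma>. g V \<in> B}
     + ((\<Sum>p\<leftarrow>C. \<bar>Leb (fst p) - Leb (snd p)\<bar>) + ip_mass \<beta> - (\<Sum>p\<leftarrow>C. Leb (fst p)))"
proof -
  define P where "P = {p\<in>set C. f (fst p) \<in> A}"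
  have inj: "inj_on fst (set C)" "inj_on snd (set C)" and "distinct C"
    using C(2,3) by (simp_all add: distinct_map)
  then have sum_list_eq: "\<And>h. (\<Sum>p\<leftarrow>C. h p) = sum h (set C)"
    by (simp add: sum_list_distinct_conv_sum_set)
  have K: "fst ` set C \<subseteq> \<beta>" using C(1) by auto
  have "{U\<in>\<beta>. f U \<in> A} \<inter> fst ` set C = fst ` P"
    using K by (auto simp: P_def)
  then have "infsum Leb {U\<in>\<beta>. f U \<in> A}
      \<le> sum Leb (fst ` P) + (ip_mass \<beta> - sum Leb (fst ` set C))"
    using infsum_Leb_le_finite_part[OF ipb _ _ K, of "{U\<in>\<beta>. f U \<in> A}"] by simp
  also have "sum Leb (fst ` set C) = (\<Sum>p\<leftarrow>C. Leb (fst p))"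
    using inj by (simp add: sum_list_eq sum.reindex)
  also have "sum Leb (fst ` P) = (\<Sum>p\<in>P. Leb (fst p))"
    using inj_on_subset[OF inj(1)] by (simp add: P_def sum.reindex)
  also have "\<dots> \<le> (\<Sum>p\<in>P. Leb (snd p)) + (\<Sum>p\<in>P. \<bar>Leb (fst p) - Leb (snd p)\<bar>)"
    by (simp add: sum.distrib[symmetric] sum_mono)
  also have "(\<Sum>p\<in>P. Leb (snd p)) = sum Leb (snd ` P)"
    using inj_on_subset[OF inj(2)] by (simp add: P_def sum.reindex)
  also have "\<dots> \<le> infsum Leb {V\<in>\<gamma>. g V \<in> B}"
  proof (rule finite_sum_le_infsum[OF Leb_summable_on[OF ipg]])
    show "snd ` P \<subseteq> {V\<in>\<gamma>. g V \<in> B}" using matched C(1) by (auto simp: P_def)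
  qed (auto simp: P_def intro: Leb_nonneg[OF ipg])
  also have "(\<Sum>p\<in>P. \<bar>Leb (fst p) - Leb (snd p)\<bar>) \<le> (\<Sum>p\<leftarrow>C. \<bar>Leb (fst p) - Leb (snd p)\<bar>)"
    unfolding sum_list_eq P_def by (intro sum_mono2) auto
  finally show ?thesis by simp
qed

lemma finite_blocks_longer:
  assumes ip: "is_ipart \<beta>" and h: "h > 0"
  shows "finite {U\<in>\<beta>. Leb U > h}"
proof (rule ccontr)
  assume "infinite {U\<in>\<beta>. Leb U > h}"
  obtain n :: nat where n: "ip_mass \<beta> / h < n" using reals_Archimedean2 by blast
  obtain F where F: "F \<subseteq> {U\<in>\<beta>. Leb U > h}" "finite F" "card F = n"
    using infinite_arbitrarily_large[OF \<open>infinite _\<close>] by blast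
  have "n * h = (\<Sum>U\<in>F. h)" using F(3) by simp
  also have "\<dots> \<le> sum Leb F" using F(1) by (intro sum_mono) auto
  also have "\<dots> \<le> ip_mass \<beta>" using F by (intro sum_Leb_le_ip_mass[OF ip]) auto
  finally show False using n h by (simp add: field_simps)
qed

lemma count_gt_mono:
  assumes "is_ipart \<beta>" "h > 0" "t \<le> t'"
  shows "count_gt \<beta> h t \<le> count_gt \<beta> h t'"
  unfolding count_gt_def
  using assms by (intro of_nat_mono card_mono finite_subset[OF _ finite_blocks_longer]) auto

lemma I_alpha_limit_exists:
  "\<beta> \<in> I_alpha \<alpha> \<Longrightarrow> t \<in> {0..ip_mass \<beta>} \<Longrightarrow>
    \<exists>l. ((\<lambda>h. h powr \<alpha> * count_gt \<beta> h t) \<longlongrightarrow> l) (at_right 0)"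
  by (simp add: I_alpha_def has_diversity_def)

lemma div_at_eq:
  assumes "((\<lambda>h. h powr \<alpha> * count_gt \<beta> h t) \<longlongrightarrow> l) (at_right 0)"
  shows "div_at \<alpha> \<beta> t = Gamma (1 - \<alpha>) * l"
  using tendsto_Lim[OF _ assms] by (simp add: div_at_def)

lemma div_at_nonneg:
  assumes "\<beta> \<in> I_alpha \<alpha>" "\<alpha> < 1" "t \<in> {0..ip_mass \<beta>}"
  shows "0 \<le> div_at \<alpha> \<beta> t"
proof -
  obtain l where l: "((\<lambda>h. h powr \<alpha> * count_gt \<beta> h t) \<longlongrightarrow> l) (at_right 0)"
    using I_alpha_limit_exists[OF assms(1,3)] by blast
  have "0 \<le> l" by (rule tendsto_le[OF _ l tendsto_const]) (auto simp: count_gt_def)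
  then show ?thesis using div_at_eq[OF l] Gamma_real_pos[of "1 - \<alpha>"] assms(2) by simp
qed

lemma div_at_mono:
  assumes b: "\<beta> \<in> I_alpha \<alpha>" and "\<alpha> < 1" and t: "0 \<le> t" "t \<le> t'" "t' \<le> ip_mass \<beta>"
  shows "div_at \<alpha> \<beta> t \<le> div_at \<alpha> \<beta> t'"
proof -
  obtain l where l: "((\<lambda>h. h powr \<alpha> * count_gt \<beta> h t) \<longlongrightarrow> l) (at_right 0)"
    using I_alpha_limit_exists[OF b, of t] t by auto
  obtain l' where l': "((\<lambda>h. h powr \<alpha> * count_gt \<beta> h t') \<longlongrightarrow> l') (at_right 0)"
    using I_alpha_limit_exists[OF b, of t'] t by auto
  have "eventually (\<lambda>h. h powr \<alpha> * count_gt \<beta> h t \<le> h powr \<alpha> * count_gt \<beta> h t') (at_right 0)"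
    using b t(2) unfolding I_alpha_def
    by (auto simp: eventually_at_right_less intro!: eventually_mono[OF eventually_at_right_less]
        mult_left_mono count_gt_mono)
  then have "l \<le> l'" using tendsto_le[OF _ l' l] by simp
  then show ?thesis
    using div_at_eq[OF l] div_at_eq[OF l'] Gamma_real_pos[of "1 - \<alpha>"] assms(2) by simp
qed

lemma div_inf_nonneg:
  assumes "\<beta> \<in> I_alpha \<alpha>" "\<alpha> < 1"
  shows "0 \<le> div_inf \<alpha> \<beta>"
proof -
  have "is_ipart \<beta>" using assms(1) by (simp add: I_alpha_def)
  then show ?thesis unfolding div_inf_def by (intro div_at_nonneg[OF assms]) (simp add: ip_mass_nonneg)
qed

lemma div_block_in_segment:
  assumes b: "\<beta> \<in> I_alpha \<alpha>" and "\<alpha> < 1" and U: "U \<in> \<beta>"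
  shows "div_block \<alpha> \<beta> U \<in> {0..div_inf \<alpha> \<beta>}"
proof -
  have "is_ipart \<beta>" using b by (simp add: I_alpha_def)
  from is_ipart_blockD[OF this U]
  have "0 \<le> (fst U + snd U) / 2" "(fst U + snd U) / 2 \<le> ip_mass \<beta>" by auto
  then show ?thesis
    unfolding div_block_def div_inf_def using assms by (auto intro: div_at_nonneg div_at_mono)
qed

lemma is_correspondence_distinct:
  assumes "is_correspondence \<beta> \<gamma> C"
  shows "distinct (map fst C)" "distinct (map snd C)"
proof -
  have "sorted_wrt (<) (map fst (map fst C))" "sorted_wrt (<) (map fst (map snd C))"
    using assms by (simp_all add: is_correspondence_def sorted_wrt_map del: map_map)
  then show "distinct (map fst C)" "distinct (map snd C)"
    by (simp_all add: strict_sorted_iff distinct_map del: map_map)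
qed

lemma is_correspondence_swap:
  "is_correspondence \<beta> \<gamma> C \<Longrightarrow> is_correspondence \<gamma> \<beta> (map prod.swap C)"
  by (auto simp: is_correspondence_def sorted_wrt_map)

lemma distortion_swap:
  "distortion \<alpha> \<gamma> \<beta> (map prod.swap C) = distortion \<alpha> \<beta> \<gamma> C"
proof -
  have "(\<lambda>p. \<bar>div_block \<alpha> \<gamma> (fst p) - div_block \<alpha> \<beta> (snd p)\<bar>) ` set (map prod.swap C)
      = (\<lambda>p. \<bar>div_block \<alpha> \<beta> (fst p) - div_block \<alpha> \<gamma> (snd p)\<bar>) ` set C"
    by (auto simp: image_image abs_minus_commute)
  then show ?thesis
    by (simp add: distortion_def Let_def o_def abs_minus_commute insert_commute)
qed

lemma distortion_lessD:
  assumes "distortion \<alpha> \<beta> \<gamma> C < e"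
  shows "(\<Sum>p\<leftarrow>C. \<bar>Leb (fst p) - Leb (snd p)\<bar>) + ip_mass \<beta> - (\<Sum>p\<leftarrow>C. Leb (fst p)) < e"
    and "p \<in> set C \<Longrightarrow> \<bar>div_block \<alpha> \<beta> (fst p) - div_block \<alpha> \<gamma> (snd p)\<bar> < e"
    and "\<bar>div_inf \<alpha> \<beta> - div_inf \<alpha> \<gamma>\<bar> < e"
proof -
  define D where "D = (\<lambda>p. \<bar>div_block \<alpha> \<beta> (fst p) - div_block \<alpha> \<gamma> (snd p)\<bar>) ` set C"
  have "Sup (insert 0 D) < e"
    and "(\<Sum>p\<leftarrow>C. \<bar>Leb (fst p) - Leb (snd p)\<bar>) + ip_mass \<beta> - (\<Sum>p\<leftarrow>C. Leb (fst p)) < e"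
    and "\<bar>div_inf \<alpha> \<beta> - div_inf \<alpha> \<gamma>\<bar> < e"
    using assms by (simp_all add: distortion_def D_def Let_def)
  then show "(\<Sum>p\<leftarrow>C. \<bar>Leb (fst p) - Leb (snd p)\<bar>) + ip_mass \<beta> - (\<Sum>p\<leftarrow>C. Leb (fst p)) < e"
    and "\<bar>div_inf \<alpha> \<beta> - div_inf \<alpha> \<gamma>\<bar> < e" by simp_all
  assume "p \<in> set C"
  then have "\<bar>div_block \<alpha> \<beta> (fst p) - div_block \<alpha> \<gamma> (snd p)\<bar> \<le> Sup (insert 0 D)"
    by (intro cSup_upper) (auto simp: D_def)
  with \<open>Sup (insert 0 D) < e\<close>
  show "\<bar>div_block \<alpha> \<beta> (fst p) - div_block \<alpha> \<gamma> (snd p)\<bar> < e" by simp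
qed

lemma M_meas_le_nbhd:
  assumes b: "\<beta> \<in> I_alpha \<alpha>" and g: "\<gamma> \<in> I_alpha \<alpha>" and "\<alpha> < 1"
    and C: "is_correspondence \<beta> \<gamma> C" "distortion \<alpha> \<beta> \<gamma> C < e"
    and B: "\<And>x y. x \<in> A \<Longrightarrow> y \<in> {0..div_inf \<alpha> \<gamma>} \<Longrightarrow> \<bar>x - y\<bar> < e \<Longrightarrow> y \<in> B"
  shows "M_meas \<alpha> \<beta> A \<le> M_meas \<alpha> \<gamma> B + e"
proof -
  have "M_meas \<alpha> \<beta> A \<le> M_meas \<alpha> \<gamma> B
      + ((\<Sum>p\<leftarrow>C. \<bar>Leb (fst p) - Leb (snd p)\<bar>) + ip_mass \<beta> - (\<Sum>p\<leftarrow>C. Leb (fst p)))"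
    unfolding M_meas_def
  proof (rule infsum_Leb_matched_le[OF _ _ _ is_correspondence_distinct[OF C(1)]])
    show "is_ipart \<beta>" "is_ipart \<gamma>" using b g by (simp_all add: I_alpha_def)
    show "set C \<subseteq> \<beta> \<times> \<gamma>" using C(1) by (auto simp: is_correspondence_def)
    show "\<forall>p\<in>set C. div_block \<alpha> \<beta> (fst p) \<in> A \<longrightarrow> div_block \<alpha> \<gamma> (snd p) \<in> B"
    proof (intro ballI impI)
      fix p assume p: "p \<in> set C" and "div_block \<alpha> \<beta> (fst p) \<in> A"
      moreover have "div_block \<alpha> \<gamma> (snd p) \<in> {0..div_inf \<alpha> \<gamma>}"
        using p C(1) by (intro div_block_in_segment[OF g \<open>\<alpha> < 1\<close>]) (auto simp: is_correspondence_def)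
      ultimately show "div_block \<alpha> \<gamma> (snd p) \<in> B"
        using B distortion_lessD(2)[OF C(2) p] by blast
    qed
  qed
  then show ?thesis using distortion_lessD(1)[OF C(2)] by linarith
qed

lemma hausdorff_in_le:
  assumes "0 < e" "\<forall>a\<in>A. \<exists>b\<in>B. \<delta> a b \<le> e" "\<forall>b\<in>B. \<exists>a\<in>A. \<delta> b a \<le> e"
  shows "hausdorff_in \<delta> A B \<le> e"
  unfolding hausdorff_in_def using assms
  by (intro cInf_lower bdd_belowI[where m=0]) auto

lemma prokhorov_in_le:
  assumes "0 < e"
    and "\<And>F. F \<subseteq> Z \<Longrightarrow> \<mu> F \<le> \<nu> (eps_nbhd \<delta> Z F e) + e"
    and "\<And>F. F \<subseteq> Z \<Longrightarrow> \<nu> F \<le> \<mu> (eps_nbhd \<delta> Z F e) + e"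
  shows "prokhorov_in \<delta> Z \<mu> \<nu> \<le> e"
  unfolding prokhorov_in_def using assms
  by (intro cInf_lower bdd_belowI[where m=0]) auto

lemma ghp_le:
  assumes adm: "admissible X Y \<delta>" and "r \<in> X" "s \<in> Y"
    and "\<delta> (Inl r) (Inr s) \<le> e"
    and "hausdorff_in \<delta> (Inl ` X) (Inr ` Y) \<le> e"
    and "prokhorov_in \<delta> (Inl ` X \<union> Inr ` Y) (\<lambda>F. \<mu> (Inl -` F)) (\<lambda>F. \<nu> (Inr -` F)) \<le> e"
  shows "ghp X r \<mu> Y s \<nu> \<le> e"
proof -
  have root_nonneg: "0 \<le> \<delta>' (Inl r) (Inr s)" if "admissible X Y \<delta>'" for \<delta>'
    using that \<open>r \<in> X\<close> \<open>s \<in> Y\<close> unfolding admissible_def Let_def by blast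
  have "ghp X r \<mu> Y s \<nu> \<le> max (\<delta> (Inl r) (Inr s)) (max (hausdorff_in \<delta> (Inl ` X) (Inr ` Y))
      (prokhorov_in \<delta> (Inl ` X \<union> Inr ` Y) (\<lambda>F. \<mu> (Inl -` F)) (\<lambda>F. \<nu> (Inr -` F))))"
    unfolding ghp_def using adm root_nonneg
    by (intro cInf_lower bdd_belowI[where m=0]) (auto intro: max.coboundedI1)
  with assms(4-) show ?thesis by simp
qed

text \<open>The common metric space for the GHP distance: both disjoint-union components are glued
  to the same real line.\<close>

definition line_dist :: "real + real \<Rightarrow> real + real \<Rightarrow> real" where
  "line_dist z w = \<bar>case_sum id id z - case_sum id id w\<bar>"

lemma line_dist_simps [simp]:
  "line_dist (Inl x) (Inl y) = \<bar>x - y\<bar>" "line_dist (Inr x) (Inr y) = \<bar>x - y\<bar>"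
  "line_dist (Inl x) (Inr y) = \<bar>x - y\<bar>" "line_dist (Inr x) (Inl y) = \<bar>x - y\<bar>"
  by (simp_all add: line_dist_def)

lemma admissible_line_dist: "admissible X Y line_dist"
  unfolding admissible_def Let_def line_dist_def dist_real_def by auto

lemma hausdorff_segments_le:
  assumes "0 \<le> a" "0 \<le> b" "\<bar>a - b\<bar> \<le> e" "0 < e"
  shows "hausdorff_in line_dist (Inl ` {0..a}) (Inr ` {0..b}) \<le> e"
proof (rule hausdorff_in_le[OF \<open>0 < e\<close>])
  show "\<forall>z\<in>Inl ` {0..a}. \<exists>w\<in>Inr ` {0..b}. line_dist z w \<le> e"
  proof
    fix z :: "real + real" assume "z \<in> Inl ` {0..a}"
    then obtain x where "z = Inl x" "0 \<le> x" "x \<le> a" by auto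
    then show "\<exists>w\<in>Inr ` {0..b}. line_dist z w \<le> e"
      using assms by (intro bexI[of _ "Inr (min x b)"]) auto
  qed
  show "\<forall>z\<in>Inr ` {0..b}. \<exists>w\<in>Inl ` {0..a}. line_dist z w \<le> e"
  proof
    fix z :: "real + real" assume "z \<in> Inr ` {0..b}"
    then obtain y where "z = Inr y" "0 \<le> y" "y \<le> b" by auto
    then show "\<exists>w\<in>Inl ` {0..a}. line_dist z w \<le> e"
      using assms by (intro bexI[of _ "Inl (min y a)"]) auto
  qed
qed

lemma dist_T_le_distortion:
  assumes b: "\<beta> \<in> I_alpha \<alpha>" and g: "\<gamma> \<in> I_alpha \<alpha>" and "\<alpha> < 1"
    and C: "is_correspondence \<beta> \<gamma> C" "distortion \<alpha> \<beta> \<gamma> C < e"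
  shows "dist_T \<alpha> \<beta> \<gamma> \<le> e"
proof -
  define X where "X = {0..div_inf \<alpha> \<beta>}"
  define Y where "Y = {0..div_inf \<alpha> \<gamma>}"
  define Z where "Z = Inl ` X \<union> Inr ` Y"
  have div_inf_close: "\<bar>div_inf \<alpha> \<beta> - div_inf \<alpha> \<gamma>\<bar> < e"
    using distortion_lessD(3)[OF C(2)] .
  then have "0 < e" by linarith
  have "0 \<le> div_inf \<alpha> \<beta>" "0 \<le> div_inf \<alpha> \<gamma>"
    using div_inf_nonneg b g \<open>\<alpha> < 1\<close> by auto
  then have "0 \<in> X" "0 \<in> Y" by (simp_all add: X_def Y_def)
  have hausdorff: "hausdorff_in line_dist (Inl ` X) (Inr ` Y) \<le> e"
    unfolding X_def Y_def using div_inf_close \<open>0 < e\<close> \<open>0 \<le> div_inf \<alpha> \<beta>\<close> \<open>0 \<le> div_inf \<alpha> \<gamma>\<close>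
    by (intro hausdorff_segments_le) auto
  have prokhorov:
    "prokhorov_in line_dist Z (\<lambda>F. M_meas \<alpha> \<beta> (Inl -` F)) (\<lambda>F. M_meas \<alpha> \<gamma> (Inr -` F)) \<le> e"
  proof (rule prokhorov_in_le[OF \<open>0 < e\<close>])
    fix F assume "F \<subseteq> Z"
    show "M_meas \<alpha> \<beta> (Inl -` F) \<le> M_meas \<alpha> \<gamma> (Inr -` eps_nbhd line_dist Z F e) + e"
    proof (rule M_meas_le_nbhd[OF b g \<open>\<alpha> < 1\<close> C])
      fix x y assume "x \<in> Inl -` F" "y \<in> {0..div_inf \<alpha> \<gamma>}" "\<bar>x - y\<bar> < e"
      then show "y \<in> Inr -` eps_nbhd line_dist Z F e"
        unfolding eps_nbhd_def Z_def Y_def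
        by (auto intro!: bexI[of _ "Inl x"] simp: abs_minus_commute)
    qed
    show "M_meas \<alpha> \<gamma> (Inr -` F) \<le> M_meas \<alpha> \<beta> (Inl -` eps_nbhd line_dist Z F e) + e"
    proof (rule M_meas_le_nbhd[OF g b \<open>\<alpha> < 1\<close> is_correspondence_swap[OF C(1)]])
      show "distortion \<alpha> \<gamma> \<beta> (map prod.swap C) < e" using C(2) by (simp add: distortion_swap)
      fix x y assume "x \<in> Inr -` F" "y \<in> {0..div_inf \<alpha> \<beta>}" "\<bar>x - y\<bar> < e"
      then show "y \<in> Inl -` eps_nbhd line_dist Z F e"
        unfolding eps_nbhd_def Z_def X_def
        by (auto intro!: bexI[of _ "Inr x"] simp: abs_minus_commute)
    qed
  qed
  show ?thesis
    unfolding dist_T_def X_def[symmetric] Y_def[symmetric]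
    using ghp_le[OF admissible_line_dist \<open>0 \<in> X\<close> \<open>0 \<in> Y\<close> _ hausdorff prokhorov[unfolded Z_def]]
      \<open>0 < e\<close> by simp
qed

theorem dist_T_le_d_alpha:
  assumes "\<beta> \<in> I_alpha \<alpha>" "\<gamma> \<in> I_alpha \<alpha>" "\<alpha> < 1"
  shows "dist_T \<alpha> \<beta> \<gamma> \<le> d_alpha \<alpha> \<beta> \<gamma>"
proof (rule dense_ge)
  fix e assume "d_alpha \<alpha> \<beta> \<gamma> < e"
  moreover have "is_correspondence \<beta> \<gamma> []" by (simp add: is_correspondence_def)
  ultimately obtain C where "is_correspondence \<beta> \<gamma> C" "distortion \<alpha> \<beta> \<gamma> C < e"
    using cInf_lessD[of "{distortion \<alpha> \<beta> \<gamma> C | C. is_correspondence \<beta> \<gamma> C}" e]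
    unfolding d_alpha_def by blast
  then show "dist_T \<alpha> \<beta> \<gamma> \<le> e" using dist_T_le_distortion assms by blast
qed

theorem corollary2p5:
  fixes \<alpha> :: real
  assumes "0 < \<alpha>" and "\<alpha> < 1"
  shows "\<forall>\<beta>\<in>I_alpha \<alpha>. \<forall>\<epsilon>>0. \<exists>\<delta>>0. \<forall>\<gamma>\<in>I_alpha \<alpha>.
           d_alpha \<alpha> \<beta> \<gamma> < \<delta> \<longrightarrow> dist_T \<alpha> \<beta> \<gamma> < \<epsilon>"
proof (intro ballI allI impI)
  fix \<beta> and \<epsilon> :: real
  assume "\<beta> \<in> I_alpha \<alpha>" "0 < \<epsilon>"
  have "dist_T \<alpha> \<beta> \<gamma> < \<epsilon>" if "\<gamma> \<in> I_alpha \<alpha>" "d_alpha \<alpha> \<beta> \<gamma> < \<epsilon>" for \<gamma>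
    using dist_T_le_d_alpha[OF \<open>\<beta> \<in> I_alpha \<alpha>\<close> that(1) \<open>\<alpha> < 1\<close>] that(2) by linarith
  with \<open>0 < \<epsilon>\<close> show "\<exists>\<delta>>0. \<forall>\<gamma>\<in>I_alpha \<alpha>. d_alpha \<alpha> \<beta> \<gamma> < \<delta> \<longrightarrow> dist_T \<alpha> \<beta> \<gamma> < \<epsilon>"
    by blast
qed

end
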